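(* Let $R=\mathbb{C}[z_1,\dots,z_n]$. Let $f_1,\dots,f_P,g\in R$ be homogeneous polynomials of degree $m$ such that $\{f_1,\dots,f_P,g\}$ is linearly independent over $\mathbb{C}$, and let $I^+=\langle f_1,\dots,f_P\rangle$ and $I^-=\langle g\rangle$. If $I^-_{m+1}\subseteq I^+_{m+1}$, then $n\le 3$ implies $P\ge n$. Moreover, for every $n\ge 4$ there exist such $f_1,\dots,f_P,g$ (linearly independent, homogeneous of a common degree $m$) with $I^-_{m+1}\subseteq I^+_{m+1}$ and $P<n$.
   Context: For a homogeneous ideal $I\subseteq R$, $I_{d}$ denotes its homogeneous component of degree $d$, i.e. the $\mathbb{C}$-vector space of homogeneous polynomials of degree $d$ lying in $I$. *)

theory Defs
  imports Complex_Main "HOL-Library.Poly_Mapping"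
begin

text \<open>Multivariate polynomials over the complex numbers: finitely supported maps from
  exponent vectors (monomials, variable i = z_(i+1)) to coefficients.\<close>
type_synonym mpoly = "(nat \<Rightarrow>\<^sub>0 nat) \<Rightarrow>\<^sub>0 complex"

definition in_ring :: "nat \<Rightarrow> mpoly \<Rightarrow> bool" where
  "in_ring n p \<longleftrightarrow> (\<forall>mon\<in>Poly_Mapping.keys p. Poly_Mapping.keys mon \<subseteq> {..<n})"

definition mon_deg :: "(nat \<Rightarrow>\<^sub>0 nat) \<Rightarrow> nat" where
  "mon_deg mon = (\<Sum>i\<in>Poly_Mapping.keys mon. Poly_Mapping.lookup mon i)"

text \<open>p is homogeneous of degree d (the zero polynomial is homogeneous of every degree).\<close>
definition homogeneous :: "nat \<Rightarrow> mpoly \<Rightarrow> bool" where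
  "homogeneous d p \<longleftrightarrow> (\<forall>mon\<in>Poly_Mapping.keys p. mon_deg mon = d)"

definition smult_mp :: "complex \<Rightarrow> mpoly \<Rightarrow> mpoly" where
  "smult_mp c p = Poly_Mapping.map (\<lambda>x. c * x) p"

definition lin_indep :: "mpoly list \<Rightarrow> bool" where
  "lin_indep xs \<longleftrightarrow>
     (\<forall>c::nat \<Rightarrow> complex. (\<Sum>i<length xs. smult_mp (c i) (xs ! i)) = 0 \<longrightarrow> (\<forall>i<length xs. c i = 0))"

definition ideal_gen :: "nat \<Rightarrow> mpoly list \<Rightarrow> mpoly set" where
  "ideal_gen n fs = {(\<Sum>i<length fs. h i * fs ! i) | h. \<forall>i<length fs. in_ring n (h i)}"

definition hom_comp :: "mpoly set \<Rightarrow> nat \<Rightarrow> mpoly set" where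
  "hom_comp I d = {p \<in> I. homogeneous d p}"

definition admissible :: "nat \<Rightarrow> nat \<Rightarrow> mpoly list \<Rightarrow> mpoly \<Rightarrow> bool" where
  "admissible n m fs g \<longleftrightarrow>
     (\<forall>f\<in>set fs. in_ring n f \<and> homogeneous m f) \<and> in_ring n g \<and> homogeneous m g \<and>
     lin_indep (fs @ [g]) \<and>
     hom_comp (ideal_gen n [g]) (m + 1) \<subseteq> hom_comp (ideal_gen n fs) (m + 1)"

end

theory Submission
  imports
    Defs
    "HOL-Computational_Algebra.Polynomial_Factorial"
    "HOL-Computational_Algebra.Field_as_Ring"
begin

text \<open>
  Let n \<le> 3 and P < n. Every z_i g lies in I^+, and the ring C[z_1, z_2, z_3] is factorial
  (it is C[x][y][z]). There an ideal with fewer than n generators is saturated with respect to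
  z_1, ..., z_n: with one generator f, f divides z_1 g and z_2 g, hence g; with two generators
  f_1 = h F_1, f_2 = h F_2 (h = gcd), the syzygies of (F_1, F_2) are multiples of (F_2, -F_1),
  the syzygies coming from z_1 g, z_2 g, z_3 g satisfy a Koszul relation, and since z_3 is
  regular modulo (z_1, z_2) this forces g \<in> (f_1, f_2). Comparing degree-m parts in
  g = \<Sum> h_i f_i turns g into a C-linear combination of the f_i, a contradiction.

  For n \<ge> 4 take g = z_1 z_2 and the n - 1 generators z_1^2, z_2^2, z_1 z_3 + z_2 z_4,
  z_1 z_5, ..., z_1 z_n: then z_3 g = z_2 f_3 - z_4 f_2 and z_4 g = z_1 f_3 - z_3 f_1, while
  the other z_i g are monomial multiples of generators.
\<close>

section \<open>Polynomials in finitely many variables\<close>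

definition var :: "nat \<Rightarrow> mpoly" where
  "var i = Poly_Mapping.single (Poly_Mapping.single i 1) 1"

lemma var_power: "var k ^ j = Poly_Mapping.single (Poly_Mapping.single k j) 1"
  by (induction j) (simp_all add: var_def mult_single single_add[symmetric] add.commute)

definition mpolys_over :: "nat set \<Rightarrow> mpoly set" where
  "mpolys_over S = {p. \<forall>mon\<in>Poly_Mapping.keys p. Poly_Mapping.keys mon \<subseteq> S}"

lemma in_ring_iff_mpolys_over: "in_ring n p \<longleftrightarrow> p \<in> mpolys_over {..<n}"
  by (simp add: in_ring_def mpolys_over_def)

lemma in_ring_mono: "in_ring n p \<Longrightarrow> n \<le> k \<Longrightarrow> in_ring k p"
  unfolding in_ring_def by force

lemma in_ring_var: "i < n \<Longrightarrow> in_ring n (var i)"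
  by (simp add: in_ring_def var_def)

lemma in_ring_add: "in_ring n p \<Longrightarrow> in_ring n q \<Longrightarrow> in_ring n (p + q)"
  unfolding in_ring_def using keys_add[of p q] by blast

lemma in_ring_uminus: "in_ring n p \<Longrightarrow> in_ring n (- p)"
  by (simp add: in_ring_def)

lemma in_ring_mult:
  assumes "in_ring n p" and "in_ring n q"
  shows "in_ring n (p * q)"
  unfolding in_ring_def
proof
  fix m assume "m \<in> Poly_Mapping.keys (p * q)"
  then obtain a b where "a \<in> Poly_Mapping.keys p" "b \<in> Poly_Mapping.keys q" "m = a + b"
    using keys_mult[of p q] by blast
  moreover have "Poly_Mapping.keys a \<subseteq> {..<n}" "Poly_Mapping.keys b \<subseteq> {..<n}"
    using assms calculation by (auto simp: in_ring_def)
  ultimately show "Poly_Mapping.keys m \<subseteq> {..<n}"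
    using keys_add[of a b] by blast
qed

lemma in_ring_single: "Poly_Mapping.keys m \<subseteq> {..<n} \<Longrightarrow> in_ring n (Poly_Mapping.single m c)"
  by (simp add: in_ring_def)

lemma poly_mapping_sum_single:
  "(p :: 'a \<Rightarrow>\<^sub>0 'b::comm_monoid_add) =
     (\<Sum>m\<in>Poly_Mapping.keys p. Poly_Mapping.single m (Poly_Mapping.lookup p m))"
  by (rule poly_mapping_eqI) (simp add: lookup_sum lookup_single when_def in_keys_iff)

lemma split_off_key:
  fixes m :: "nat \<Rightarrow>\<^sub>0 nat" and k :: nat
  defines "m0 \<equiv> m - Poly_Mapping.single k (Poly_Mapping.lookup m k)"
  shows "m = m0 + Poly_Mapping.single k (Poly_Mapping.lookup m k)"
    and "Poly_Mapping.lookup m0 k = 0"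
    and "Poly_Mapping.keys m0 \<subseteq> Poly_Mapping.keys m - {k}"
  unfolding m0_def
  by (auto intro!: poly_mapping_eqI simp: lookup_add lookup_minus lookup_single when_def in_keys_iff
      split: if_splits)

lemma lookup_single_mult:
  "Poly_Mapping.lookup (Poly_Mapping.single s c * (p :: mpoly)) u =
     c * (\<Sum>q. Poly_Mapping.lookup p q when u = s + q)"
  by (simp add: lookup_mult lookup_single when_mult Sum_any_right_distrib mult_when)

lemma lookup_var_mult_shift:
  "Poly_Mapping.lookup (var k * p) (Poly_Mapping.single k 1 + m) = Poly_Mapping.lookup p m"
  unfolding var_def lookup_single_mult by simp

lemma lookup_var_mult_eq_0:
  assumes "Poly_Mapping.lookup m k = 0"
  shows "Poly_Mapping.lookup (var k * p) m = 0"
proof -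
  have "m \<noteq> Poly_Mapping.single k 1 + q" for q
    using assms by (auto dest: arg_cong[of _ _ "\<lambda>m. Poly_Mapping.lookup m k"] simp: lookup_add)
  then show ?thesis unfolding var_def lookup_single_mult by simp
qed

definition const_mpoly :: "complex \<Rightarrow> mpoly" where
  "const_mpoly c = Poly_Mapping.single 0 c"

lemma smult_mp_eq_const_mpoly_mult: "smult_mp c p = const_mpoly c * p"
  unfolding smult_mp_def const_mpoly_def by (rule mult_map_scale_conv_mult)

lemma lookup_smult_mp: "Poly_Mapping.lookup (smult_mp c p) m = c * Poly_Mapping.lookup p m"
  unfolding smult_mp_eq_const_mpoly_mult const_mpoly_def lookup_single_mult by simp

lemma ideal_gen_mono: "n \<le> k \<Longrightarrow> ideal_gen n fs \<subseteq> ideal_gen k fs"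
  unfolding ideal_gen_def using in_ring_mono by blast

lemma ideal_gen_add:
  assumes "p \<in> ideal_gen n fs" and "q \<in> ideal_gen n fs"
  shows "p + q \<in> ideal_gen n fs"
proof -
  obtain h h' where "\<forall>i<length fs. in_ring n (h i)" "\<forall>i<length fs. in_ring n (h' i)"
    and "p = (\<Sum>i<length fs. h i * fs ! i)" "q = (\<Sum>i<length fs. h' i * fs ! i)"
    using assms by (auto simp: ideal_gen_def)
  then show ?thesis
    unfolding ideal_gen_def
    by (intro CollectI exI[of _ "\<lambda>i. h i + h' i"]) (simp add: in_ring_add sum.distrib distrib_right)
qed

lemma ideal_gen_mult:
  assumes "in_ring n r" and "p \<in> ideal_gen n fs"
  shows "r * p \<in> ideal_gen n fs"
proof -
  obtain h where "\<forall>i<length fs. in_ring n (h i)" and "p = (\<Sum>i<length fs. h i * fs ! i)"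
    using assms(2) by (auto simp: ideal_gen_def)
  then show ?thesis
    unfolding ideal_gen_def using assms(1)
    by (intro CollectI exI[of _ "\<lambda>i. r * h i"]) (simp add: in_ring_mult sum_distrib_left mult.assoc)
qed

lemma zero_mem_ideal_gen: "0 \<in> ideal_gen n fs"
  unfolding ideal_gen_def by (auto intro: exI[of _ "\<lambda>_. 0"] simp: in_ring_def)

lemma ideal_gen_sum:
  "(\<And>a. a \<in> A \<Longrightarrow> F a \<in> ideal_gen n fs) \<Longrightarrow> (\<Sum>a\<in>A. F a) \<in> ideal_gen n fs"
  by (induction A rule: infinite_finite_induct) (simp_all add: zero_mem_ideal_gen ideal_gen_add)

lemma mult_gen_mem_ideal_gen:
  assumes "i < length fs" and "in_ring n r"
  shows "r * fs ! i \<in> ideal_gen n fs"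
  unfolding ideal_gen_def
proof (intro CollectI exI conjI)
  show "r * fs ! i = (\<Sum>j<length fs. (if j = i then r else 0) * fs ! j)"
    using assms(1) by (simp add: if_distrib[of "\<lambda>x. x * _"] cong: if_cong)
  show "\<forall>j<length fs. in_ring n (if j = i then r else 0)"
    using assms(2) by (simp add: in_ring_def)
qed

lemma mult_mem_ideal_gen_if_var_mult_mem:
  assumes vars: "\<forall>k<n. var k * g \<in> ideal_gen n fs"
    and h: "in_ring n h" and h0: "Poly_Mapping.lookup h 0 = 0"
  shows "h * g \<in> ideal_gen n fs"
proof -
  have "Poly_Mapping.single m (Poly_Mapping.lookup h m) * g \<in> ideal_gen n fs"
    if m: "m \<in> Poly_Mapping.keys h" for m
  proof -
    have "m \<noteq> 0" using m h0 by (auto simp: in_keys_iff)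
    then obtain k where k: "k \<in> Poly_Mapping.keys m" by (metis keys_eq_empty ex_in_conv)
    have kn: "k < n" and m_n: "Poly_Mapping.keys m \<subseteq> {..<n}"
      using h m k by (auto simp: in_ring_def)
    define m' where "m' = m - Poly_Mapping.single k 1"
    have "m = m' + Poly_Mapping.single k 1"
      using k by (intro poly_mapping_eqI)
        (auto simp: m'_def lookup_add lookup_minus lookup_single when_def in_keys_iff)
    then have eq: "Poly_Mapping.single m (Poly_Mapping.lookup h m) * g =
        Poly_Mapping.single m' (Poly_Mapping.lookup h m) * (var k * g)"
      by (simp add: var_def mult_single mult.assoc[symmetric])
    have "Poly_Mapping.keys m' \<subseteq> Poly_Mapping.keys m"
      by (auto simp: m'_def in_keys_iff lookup_minus)
    then have "in_ring n (Poly_Mapping.single m' (Poly_Mapping.lookup h m))"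
      using m_n by (intro in_ring_single) blast
    moreover have "var k * g \<in> ideal_gen n fs" using vars kn by blast
    ultimately show ?thesis unfolding eq by (rule ideal_gen_mult)
  qed
  then have "(\<Sum>m\<in>Poly_Mapping.keys h. Poly_Mapping.single m (Poly_Mapping.lookup h m) * g)
      \<in> ideal_gen n fs"
    by (rule ideal_gen_sum)
  moreover have
    "(\<Sum>m\<in>Poly_Mapping.keys h. Poly_Mapping.single m (Poly_Mapping.lookup h m) * g) = h * g"
    by (metis poly_mapping_sum_single sum_distrib_right)
  ultimately show ?thesis by simp
qed

section \<open>Ideals with few generators in factorial rings\<close>

definition ideal_of :: "'a::comm_semiring_1 list \<Rightarrow> 'a set" where
  "ideal_of fs = {(\<Sum>i<length fs. h i * fs ! i) | h. True}"

lemma ideal_of_Nil [simp]: "ideal_of [] = {0}"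
  by (simp add: ideal_of_def)

lemma mem_ideal_of_single: "p \<in> ideal_of [f] \<longleftrightarrow> f dvd p"
  by (auto simp: ideal_of_def dvd_def intro: exI[of _ "\<lambda>_. _"] mult.commute)

lemma mem_ideal_of_pair: "p \<in> ideal_of [f1, f2] \<longleftrightarrow> (\<exists>a b. p = a * f1 + b * f2)"
proof -
  have "(\<Sum>i<2. h i * [f1, f2] ! i) = h 0 * f1 + h 1 * f2" for h :: "nat \<Rightarrow> 'a"
    by (simp add: numeral_2_eq_2)
  then show ?thesis
    unfolding ideal_of_def by (auto intro: exI[of _ "\<lambda>i. if i = 0 then _ else _"])
qed

lemma dvd_if_dvd_coprime_multiples:
  fixes f g u v :: "'a::semiring_gcd"
  assumes "coprime u v" and "f dvd u * g" and "f dvd v * g"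
  shows "f dvd g"
proof -
  have "f dvd gcd (u * g) (v * g)" using assms(2,3) by simp
  also have "gcd (u * g) (v * g) = normalize g"
    using assms(1) by (simp add: gcd_mult_right coprime_commute[of u v])
  finally show ?thesis by simp
qed

lemma syzygy_of_coprime:
  fixes p q F1 F2 :: "'a::ring_gcd"
  assumes "coprime F1 F2" and "F2 \<noteq> 0" and "p * F1 = q * F2"
  shows "\<exists>c. p = c * F2 \<and> q = c * F1"
proof -
  have "F2 dvd p * F1" using assms(3) by simp
  then obtain c where c: "p = F2 * c"
    using assms(1) by (auto simp: coprime_commute coprime_dvd_mult_left_iff)
  then have "F2 * (c * F1) = F2 * q" using assms(3) by (simp add: ac_simps)
  then have "q = c * F1" using assms(2) by simp
  with c show ?thesis by (auto simp: ac_simps)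
qed

definition regular_mod :: "'a::comm_semiring_1 \<Rightarrow> 'a \<Rightarrow> 'a \<Rightarrow> bool" where
  "regular_mod z x y \<longleftrightarrow> (\<forall>c. z * c \<in> ideal_of [x, y] \<longrightarrow> c \<in> ideal_of [x, y])"

lemma mem_ideal_of_coprime_pair_if_mult_mem:
  fixes x y z G F1 F2 :: "'a::ring_gcd"
  assumes cop: "coprime F1 F2" and F2: "F2 \<noteq> 0"
    and xy: "coprime x y" and x: "x \<noteq> 0" and reg: "regular_mod z x y"
    and Gx: "x * G \<in> ideal_of [F1, F2]" and Gy: "y * G \<in> ideal_of [F1, F2]"
    and Gz: "z * G \<in> ideal_of [F1, F2]"
  shows "G \<in> ideal_of [F1, F2]"
proof -
  obtain a0 b0 where e0: "x * G = a0 * F1 + b0 * F2" using Gx by (auto simp: mem_ideal_of_pair)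
  obtain a1 b1 where e1: "y * G = a1 * F1 + b1 * F2" using Gy by (auto simp: mem_ideal_of_pair)
  obtain a2 b2 where e2: "z * G = a2 * F1 + b2 * F2" using Gz by (auto simp: mem_ideal_of_pair)
  have "y * (x * G) = x * (y * G)" "z * (y * G) = y * (z * G)" "x * (z * G) = z * (x * G)"
    by (simp_all add: ac_simps)
  then have "(y * a0 - x * a1) * F1 = (x * b1 - y * b0) * F2"
    and "(z * a1 - y * a2) * F1 = (y * b2 - z * b1) * F2"
    and "(x * a2 - z * a0) * F1 = (z * b0 - x * b2) * F2"
    unfolding e0 e1 e2 by (simp_all add: algebra_simps)
  then obtain c01 c12 c20 where c01: "y * a0 - x * a1 = c01 * F2" "x * b1 - y * b0 = c01 * F1"
    and c12: "z * a1 - y * a2 = c12 * F2" and c20: "x * a2 - z * a0 = c20 * F2"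
    using syzygy_of_coprime[OF cop F2] by meson
  \<comment> \<open>Koszul relation among the syzygies; regularity of z then puts c01 into (x, y)\<close>
  have "(z * c01 + x * c12 + y * c20) * F2 = z * (c01 * F2) + x * (c12 * F2) + y * (c20 * F2)"
    by (simp add: algebra_simps)
  also have "\<dots> = z * (y * a0 - x * a1) + x * (z * a1 - y * a2) + y * (x * a2 - z * a0)"
    by (simp only: c01(1) c12 c20)
  also have "\<dots> = 0"
    by (simp add: algebra_simps)
  finally have "z * c01 + x * c12 + y * c20 = 0" using F2 by simp
  then have "z * c01 = (- c12) * x + (- c20) * y"
    by (simp add: algebra_simps eq_neg_iff_add_eq_0)
  then obtain w1 w0 where w: "c01 = w1 * x - w0 * y"
    using reg unfolding regular_mod_def mem_ideal_of_pair
    by (metis diff_minus_eq_add minus_mult_left)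
  have "y * (a0 + w0 * F2) = x * (a1 + w1 * F2)"
    using c01(1) unfolding w by (simp add: algebra_simps)
  then obtain al where al: "a0 + w0 * F2 = x * al"
    using xy by (metis coprime_dvd_mult_right_iff dvd_triv_left dvdE)
  have "y * (b0 - w0 * F1) = x * (b1 - w1 * F1)"
    using c01(2) unfolding w by (simp add: algebra_simps)
  then obtain be where be: "b0 - w0 * F1 = x * be"
    using xy by (metis coprime_dvd_mult_right_iff dvd_triv_left dvdE)
  have "x * G = (a0 + w0 * F2) * F1 + (b0 - w0 * F1) * F2"
    using e0 by (simp add: algebra_simps)
  also have "\<dots> = x * (al * F1 + be * F2)"
    unfolding al be by (simp add: algebra_simps)
  finally show ?thesis using x by (auto simp: mem_ideal_of_pair)
qed

lemma mem_ideal_of_pair_mult_cancel: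
  fixes c p F1 F2 :: "'a::semidom_divide"
  assumes "c \<noteq> 0"
  shows "c * p \<in> ideal_of [c * F1, c * F2] \<longleftrightarrow> p \<in> ideal_of [F1, F2]"
proof -
  have "c * p = a * (c * F1) + b * (c * F2) \<longleftrightarrow> p = a * F1 + b * F2" for a b
    using mult_left_cancel[OF assms, of p "a * F1 + b * F2"] by (simp add: algebra_simps)
  then show ?thesis by (simp add: mem_ideal_of_pair)
qed

lemma mem_ideal_of_pair_if_mult_mem:
  fixes x y z g f1 f2 :: "'a::ring_gcd"
  assumes xy: "coprime x y" and x: "x \<noteq> 0" and reg: "regular_mod z x y"
    and gx: "x * g \<in> ideal_of [f1, f2]" and gy: "y * g \<in> ideal_of [f1, f2]"
    and gz: "z * g \<in> ideal_of [f1, f2]"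
  shows "g \<in> ideal_of [f1, f2]"
proof (cases "f2 = 0")
  case True
  then have "f1 dvd x * g" "f1 dvd y * g" using gx gy by (auto simp: mem_ideal_of_pair)
  then have "f1 dvd g" by (rule dvd_if_dvd_coprime_multiples[OF xy])
  then show ?thesis using True by (auto simp: mem_ideal_of_pair elim!: dvdE intro: mult.commute)
next
  case False
  define h where "h = gcd f1 f2"
  define F1 where "F1 = f1 div h"
  define F2 where "F2 = f2 div h"
  have h: "h \<noteq> 0" and f1: "f1 = h * F1" and f2: "f2 = h * F2"
    using False by (simp_all add: h_def F1_def F2_def)
  have F2: "F2 \<noteq> 0" using False f2 by auto
  have cop: "coprime F1 F2" unfolding F1_def F2_def h_def using False by (simp add: div_gcd_coprime)
  have h_dvd: "h dvd p" if "p \<in> ideal_of [f1, f2]" for p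
    using that by (auto simp: mem_ideal_of_pair h_def)
  have "h dvd g" using h_dvd[OF gx] h_dvd[OF gy] by (rule dvd_if_dvd_coprime_multiples[OF xy])
  then obtain G where g: "g = h * G" by (elim dvdE)
  have cancel: "h * p \<in> ideal_of [f1, f2] \<longleftrightarrow> p \<in> ideal_of [F1, F2]" for p
    unfolding f1 f2 using h by (rule mem_ideal_of_pair_mult_cancel)
  have "x * G \<in> ideal_of [F1, F2]" "y * G \<in> ideal_of [F1, F2]" "z * G \<in> ideal_of [F1, F2]"
    using gx gy gz unfolding g cancel[symmetric] by (simp_all add: mult.left_commute)
  then have "G \<in> ideal_of [F1, F2]"
    using mem_ideal_of_coprime_pair_if_mult_mem[OF cop F2 xy x reg] by blast
  then show ?thesis unfolding g cancel .
qed

lemma mem_ideal_of_if_mult_mem: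
  fixes x y z g :: "'a::ring_gcd"
  assumes xy: "coprime x y" and x: "x \<noteq> 0" and reg: "regular_mod z x y"
    and len: "length fs < n" and n: "n \<le> 3"
    and mult: "\<forall>i<n. [x, y, z] ! i * g \<in> ideal_of fs"
  shows "g \<in> ideal_of fs"
proof -
  have gx: "x * g \<in> ideal_of fs" using mult[rule_format, of 0] len by simp
  have gy: "y * g \<in> ideal_of fs" if "1 < n" using mult[rule_format, of 1] that by simp
  have gz: "z * g \<in> ideal_of fs" if "2 < n"
    using mult[rule_format, of 2] that by (simp add: numeral_2_eq_2)
  consider "fs = []" | f where "fs = [f]" | f1 f2 where "fs = [f1, f2]"
  proof -
    have "length fs \<le> 2" using len n by simp
    then show thesis using that by (cases fs rule: remdups_adj.cases) auto
  qed
  then show ?thesis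
  proof cases
    case 1
    then show ?thesis using gx x by simp
  next
    case (2 f)
    then have "1 < n" using len by simp
    then have "f dvd x * g" "f dvd y * g" using gx gy 2 by (simp_all add: mem_ideal_of_single)
    then show ?thesis unfolding 2 mem_ideal_of_single by (rule dvd_if_dvd_coprime_multiples[OF xy])
  next
    case (3 f1 f2)
    then have "2 < n" using len by simp
    then show ?thesis
      using mem_ideal_of_pair_if_mult_mem[OF xy x reg] gx gy gz unfolding 3 by simp
  qed
qed

lemma coprime_X_const:
  fixes c :: "'a::idom_divide"
  assumes "c \<noteq> 0"
  shows "coprime [:0, 1:] [:c:]"
proof (rule coprimeI)
  fix d assume dX: "d dvd [:0, 1:]" and dc: "d dvd [:c:]"
  have "degree d = 0" using dvd_imp_degree_le[OF dc] assms by simp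
  then obtain e where d: "d = [:e:]" by (metis degree_eq_zeroE)
  from dX obtain q where "[:0, 1:] = [:e:] * q" unfolding d by (elim dvdE)
  then have "coeff [:0, 1:] 1 = coeff ([:e:] * q) 1" by simp
  then have "1 = e * coeff q 1" by simp
  then show "is_unit d" unfolding d by (metis dvdI is_unit_const_poly_iff)
qed

lemma regular_mod_X_const:
  fixes y z :: "'a::ring_gcd"
  assumes "coprime y z"
  shows "regular_mod [:z:] [:0, 1:] [:y:]"
  unfolding regular_mod_def mem_ideal_of_pair
proof (intro allI impI)
  fix c :: "'a poly"
  assume "\<exists>a b. [:z:] * c = a * [:0, 1:] + b * [:y:]"
  then obtain a b where "[:z:] * c = a * [:0, 1:] + b * [:y:]" by blast
  then have "coeff ([:z:] * c) 0 = coeff (a * [:0, 1:] + b * [:y:]) 0" by simp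
  then have "z * coeff c 0 = coeff b 0 * y" by (simp add: coeff_mult_0)
  then have "y dvd coeff c 0"
    using assms by (metis coprime_commute coprime_dvd_mult_right_iff dvd_triv_right)
  then obtain k where k: "coeff c 0 = y * k" by (elim dvdE)
  obtain e where c: "c = pCons (y * k) e" by (metis k pCons_cases coeff_pCons_0)
  have "c = e * [:0, 1:] + [:k:] * [:y:]"
    unfolding c by (simp add: mult.commute)
  then show "\<exists>a b. c = a * [:0, 1:] + b * [:y:]" by blast
qed

section \<open>The factorial ring C[z_1, z_2, z_3]\<close>

definition is_ring_hom :: "('a::comm_ring_1 \<Rightarrow> 'b::comm_ring_1) \<Rightarrow> bool" where
  "is_ring_hom f \<longleftrightarrow> f 1 = 1 \<and> (\<forall>x y. f (x + y) = f x + f y) \<and> (\<forall>x y. f (x * y) = f x * f y)"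

lemma is_ring_hom_add: "is_ring_hom f \<Longrightarrow> f (x + y) = f x + f y"
  and is_ring_hom_mult: "is_ring_hom f \<Longrightarrow> f (x * y) = f x * f y"
  by (simp_all add: is_ring_hom_def)

lemma is_ring_hom_0: "is_ring_hom f \<Longrightarrow> f 0 = 0"
  using is_ring_hom_add[of f 0 0] by simp

lemma is_ring_hom_diff: "is_ring_hom f \<Longrightarrow> f (x - y) = f x - f y"
  using is_ring_hom_add[of f "x - y" y] by (simp add: eq_diff_eq)

lemma is_ring_hom_sum: "is_ring_hom f \<Longrightarrow> f (\<Sum>a\<in>A. g a) = (\<Sum>a\<in>A. f (g a))"
  by (induction A rule: infinite_finite_induct) (simp_all add: is_ring_hom_0 is_ring_hom_add)

lemma map_poly_hom_add: "is_ring_hom f \<Longrightarrow> map_poly f (p + q) = map_poly f p + map_poly f q"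
  by (rule poly_eqI) (simp add: coeff_map_poly is_ring_hom_0 is_ring_hom_add)

lemma map_poly_hom_mult: "is_ring_hom f \<Longrightarrow> map_poly f (p * q) = map_poly f p * map_poly f q"
proof (induction p)
  case (pCons a p)
  then show ?case
    by (simp add: map_poly_pCons map_poly_hom_add map_poly_smult is_ring_hom_0 is_ring_hom_mult)
qed simp

lemma is_ring_hom_poly_map_poly: "is_ring_hom f \<Longrightarrow> is_ring_hom (\<lambda>p. poly (map_poly f p) x)"
  by (simp add: is_ring_hom_def map_poly_hom_add map_poly_hom_mult)

definition lift_poly :: "('a::comm_ring_1 \<Rightarrow> mpoly) \<Rightarrow> nat \<Rightarrow> 'a poly \<Rightarrow> mpoly" where
  "lift_poly f k p = poly (map_poly f p) (var k)"

lemma is_ring_hom_lift_poly: "is_ring_hom f \<Longrightarrow> is_ring_hom (lift_poly f k)"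
  unfolding lift_poly_def by (rule is_ring_hom_poly_map_poly)

lemma lift_poly_pCons:
  "is_ring_hom f \<Longrightarrow> lift_poly f k (pCons a p) = f a + var k * lift_poly f k p"
  by (simp add: lift_poly_def map_poly_pCons is_ring_hom_0)

lemma lift_poly_monom: "is_ring_hom f \<Longrightarrow> lift_poly f k (monom a j) = f a * var k ^ j"
  by (simp add: lift_poly_def map_poly_monom is_ring_hom_0 poly_monom)

lemma lookup_lift_poly:
  assumes f: "is_ring_hom f" and S: "range f \<subseteq> mpolys_over S" and k: "k \<notin> S"
    and m: "Poly_Mapping.lookup m k = 0"
  shows "Poly_Mapping.lookup (lift_poly f k p) (m + Poly_Mapping.single k j) =
           Poly_Mapping.lookup (f (coeff p j)) m"
proof (induction p arbitrary: j)
  case 0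
  then show ?case by (simp add: lift_poly_def is_ring_hom_0[OF f])
next
  case (pCons a p)
  have const: "Poly_Mapping.lookup (f a) (m + Poly_Mapping.single k j) = 0" if "j \<noteq> 0"
  proof -
    have "k \<in> Poly_Mapping.keys (m + Poly_Mapping.single k j)"
      using that by (simp add: in_keys_iff lookup_add)
    then have "m + Poly_Mapping.single k j \<notin> Poly_Mapping.keys (f a)"
      using S k by (auto simp: mpolys_over_def)
    then show ?thesis by (simp add: in_keys_iff)
  qed
  have shift: "Poly_Mapping.lookup (var k * lift_poly f k p) (m + Poly_Mapping.single k j) =
      Poly_Mapping.lookup (f (coeff p (j - 1))) m" if "j \<noteq> 0"
  proof -
    have "m + Poly_Mapping.single k j =
        Poly_Mapping.single k 1 + (m + Poly_Mapping.single k (j - 1))"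
      using that by (simp add: single_add[symmetric] ac_simps)
    then show ?thesis by (simp only: lookup_var_mult_shift pCons.IH)
  qed
  show ?case
  proof (cases "j = 0")
    case True
    then show ?thesis using m by (simp add: lift_poly_pCons[OF f] lookup_add lookup_var_mult_eq_0)
  next
    case False
    then show ?thesis
      by (simp add: lift_poly_pCons[OF f] lookup_add const shift coeff_pCons split: nat.split)
  qed
qed

lemma lift_poly_in_mpolys_over:
  assumes f: "is_ring_hom f" and S: "range f \<subseteq> mpolys_over S" and k: "k \<notin> S"
  shows "lift_poly f k p \<in> mpolys_over (insert k S)"
  unfolding mpolys_over_def
proof (intro CollectI ballI)
  fix m assume "m \<in> Poly_Mapping.keys (lift_poly f k p)"
  define m0 where "m0 = m - Poly_Mapping.single k (Poly_Mapping.lookup m k)"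
  have "Poly_Mapping.lookup (lift_poly f k p) m =
      Poly_Mapping.lookup (f (coeff p (Poly_Mapping.lookup m k))) m0"
    using lookup_lift_poly[OF f S k split_off_key(2)] split_off_key(1)[of m k]
    unfolding m0_def by metis
  with \<open>m \<in> _\<close> have "m0 \<in> Poly_Mapping.keys (f (coeff p (Poly_Mapping.lookup m k)))"
    by (simp add: in_keys_iff)
  then have "Poly_Mapping.keys m0 \<subseteq> S" using S by (auto simp: mpolys_over_def)
  moreover have "Poly_Mapping.keys m \<subseteq> Poly_Mapping.keys m0 \<union> {k}"
    by (auto simp: m0_def in_keys_iff lookup_minus lookup_single when_def split: if_splits)
  ultimately show "Poly_Mapping.keys m \<subseteq> insert k S" by blast
qed

lemma inj_lift_poly:
  assumes f: "is_ring_hom f" and inj: "inj f" and S: "range f \<subseteq> mpolys_over S" and k: "k \<notin> S"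
  shows "inj (lift_poly f k)"
proof -
  have "p = 0" if p: "lift_poly f k p = 0" for p
  proof (rule poly_eqI)
    fix j
    have "Poly_Mapping.lookup (f (coeff p j)) m = 0" for m
    proof (cases "Poly_Mapping.lookup m k = 0")
      case True
      then show ?thesis using lookup_lift_poly[OF f S k True, of p j] p by simp
    next
      case False
      have "f (coeff p j) \<in> mpolys_over S" using S by auto
      moreover have "k \<in> Poly_Mapping.keys m" using False by (simp add: in_keys_iff)
      ultimately have "m \<notin> Poly_Mapping.keys (f (coeff p j))"
        using k by (auto simp: mpolys_over_def)
      then show ?thesis by (simp add: in_keys_iff)
    qed
    then have "f (coeff p j) = f 0" by (simp add: is_ring_hom_0[OF f] poly_mapping_eqI)
    then show "coeff p j = coeff 0 j" using inj by (simp add: inj_eq)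
  qed
  then show ?thesis
    using is_ring_hom_diff[OF is_ring_hom_lift_poly[OF f]] by (intro injI) (metis right_minus_eq)
qed

lemma mpolys_over_subset_range_lift_poly:
  assumes f: "is_ring_hom f" and S: "mpolys_over S \<subseteq> range f"
  shows "mpolys_over (insert k S) \<subseteq> range (lift_poly f k)"
proof
  fix p assume p: "p \<in> mpolys_over (insert k S)"
  have "\<exists>q. lift_poly f k q = Poly_Mapping.single m (Poly_Mapping.lookup p m)"
    if m: "m \<in> Poly_Mapping.keys p" for m
  proof -
    define m0 where "m0 = m - Poly_Mapping.single k (Poly_Mapping.lookup m k)"
    have "Poly_Mapping.keys m0 \<subseteq> S" using split_off_key(3)[of m k] p m unfolding m0_def
      by (auto simp: mpolys_over_def)
    then have "Poly_Mapping.single m0 (Poly_Mapping.lookup p m) \<in> mpolys_over S"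
      by (simp add: mpolys_over_def)
    then obtain a where a: "f a = Poly_Mapping.single m0 (Poly_Mapping.lookup p m)" using S by auto
    have "lift_poly f k (monom a (Poly_Mapping.lookup m k)) =
        Poly_Mapping.single (m0 + Poly_Mapping.single k (Poly_Mapping.lookup m k))
          (Poly_Mapping.lookup p m)"
      by (simp add: lift_poly_monom[OF f] a var_power mult_single)
    then show ?thesis using split_off_key(1)[of m k] unfolding m0_def by metis
  qed
  then obtain Q where Q: "\<forall>m\<in>Poly_Mapping.keys p.
      lift_poly f k (Q m) = Poly_Mapping.single m (Poly_Mapping.lookup p m)"
    by metis
  have "lift_poly f k (\<Sum>m\<in>Poly_Mapping.keys p. Q m) = p"
    using Q poly_mapping_sum_single[of p]
    by (simp add: is_ring_hom_sum[OF is_ring_hom_lift_poly[OF f]])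
  then show "p \<in> range (lift_poly f k)" by (metis rangeI)
qed

lemma bij_betw_lift_poly:
  assumes "is_ring_hom f" and "bij_betw f UNIV (mpolys_over S)" and "k \<notin> S"
  shows "bij_betw (lift_poly f k) UNIV (mpolys_over (insert k S))"
  using assms lift_poly_in_mpolys_over[of f S k] inj_lift_poly[of f S k]
    mpolys_over_subset_range_lift_poly[of f S k]
  by (auto simp: bij_betw_def)

lemma is_ring_hom_const_mpoly: "is_ring_hom const_mpoly"
  by (simp add: is_ring_hom_def const_mpoly_def single_add mult_single)

lemma bij_betw_const_mpoly: "bij_betw const_mpoly UNIV (mpolys_over {})"
proof -
  have "p = const_mpoly (Poly_Mapping.lookup p 0)" if "p \<in> mpolys_over {}" for p
  proof (rule poly_mapping_eqI)
    fix m
    have "m \<in> Poly_Mapping.keys p \<Longrightarrow> m = 0"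
      using that by (auto simp: mpolys_over_def intro: poly_mapping_eqI simp: in_keys_iff)
    then show "Poly_Mapping.lookup p m =
        Poly_Mapping.lookup (const_mpoly (Poly_Mapping.lookup p 0)) m"
      by (cases "m = 0") (auto simp: const_mpoly_def lookup_single in_keys_iff)
  qed
  moreover have "const_mpoly c \<in> mpolys_over {}" for c
    by (simp add: const_mpoly_def mpolys_over_def)
  moreover have "inj const_mpoly"
    unfolding const_mpoly_def by (rule inj_single)
  ultimately show ?thesis
    by (auto simp: bij_betw_def)
qed

text \<open>mpoly has no factorial-ring instance, so the divisibility arguments are run in
  complex poly poly poly, which embed3 identifies with the polynomials in z_1, z_2, z_3.\<close>

definition embed3 :: "complex poly poly poly \<Rightarrow> mpoly" where
  "embed3 = lift_poly (lift_poly (lift_poly const_mpoly 2) 1) 0"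

lemma is_ring_hom_embed3: "is_ring_hom embed3"
  unfolding embed3_def by (intro is_ring_hom_lift_poly is_ring_hom_const_mpoly)

lemma bij_betw_embed3: "bij_betw embed3 UNIV (mpolys_over {..<3})"
proof -
  have "bij_betw (lift_poly const_mpoly 2) UNIV (mpolys_over {2})"
    using bij_betw_lift_poly[OF is_ring_hom_const_mpoly bij_betw_const_mpoly] by simp
  then have "bij_betw (lift_poly (lift_poly const_mpoly 2) 1) UNIV (mpolys_over {1, 2})"
    using bij_betw_lift_poly[OF is_ring_hom_lift_poly[OF is_ring_hom_const_mpoly]] by simp
  then have "bij_betw embed3 UNIV (mpolys_over {0, 1, 2})"
    unfolding embed3_def
    using bij_betw_lift_poly[OF is_ring_hom_lift_poly[OF
          is_ring_hom_lift_poly[OF is_ring_hom_const_mpoly]]]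
    by simp
  moreover have "{..<3} = {0, 1, 2::nat}" by auto
  ultimately show ?thesis by simp
qed

lemma embed3_vars:
  "embed3 [:0, 1:] = var 0" "embed3 [:[:0, 1:]:] = var 1" "embed3 [:[:[:0, 1:]:]:] = var 2"
  by (simp_all add: embed3_def lift_poly_def map_poly_pCons const_mpoly_def)

lemma mem_ideal_gen_image_iff:
  assumes hom: "is_ring_hom \<psi>" and bij: "bij_betw \<psi> UNIV (mpolys_over {..<n})"
  shows "\<psi> p \<in> ideal_gen n (map \<psi> qs) \<longleftrightarrow> p \<in> ideal_of qs"
proof
  assume "\<psi> p \<in> ideal_gen n (map \<psi> qs)"
  then obtain h where h: "\<forall>i<length qs. in_ring n (h i)"
    and p: "\<psi> p = (\<Sum>i<length qs. h i * \<psi> (qs ! i))"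
    by (auto simp: ideal_gen_def)
  define h' where "h' i = inv \<psi> (h i)" for i
  have "\<psi> (h' i) = h i" if "i < length qs" for i
    using h that bij unfolding h'_def in_ring_iff_mpolys_over
    by (simp add: bij_betw_def f_inv_into_f)
  then have "\<psi> p = \<psi> (\<Sum>i<length qs. h' i * qs ! i)"
    unfolding p by (simp add: is_ring_hom_sum[OF hom] is_ring_hom_mult[OF hom])
  then have "p = (\<Sum>i<length qs. h' i * qs ! i)"
    using bij by (simp add: bij_betw_def inj_eq)
  then show "p \<in> ideal_of qs" by (auto simp: ideal_of_def)
next
  assume "p \<in> ideal_of qs"
  then obtain h where "p = (\<Sum>i<length qs. h i * qs ! i)" by (auto simp: ideal_of_def)
  then have "\<psi> p = (\<Sum>i<length qs. \<psi> (h i) * map \<psi> qs ! i)"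
    by (simp add: is_ring_hom_sum[OF hom] is_ring_hom_mult[OF hom])
  moreover have "in_ring n (\<psi> (h i))" for i
    using bij by (auto simp: bij_betw_def in_ring_iff_mpolys_over)
  ultimately show "\<psi> p \<in> ideal_gen n (map \<psi> qs)" by (auto simp: ideal_gen_def)
qed

lemma mem_ideal_gen_3_if_var_mult_mem:
  assumes len: "length fs < n" and n: "n \<le> 3"
    and g: "in_ring 3 g" and fs: "\<forall>f\<in>set fs. in_ring 3 f"
    and mult: "\<forall>i<n. var i * g \<in> ideal_gen 3 fs"
  shows "g \<in> ideal_gen 3 fs"
proof -
  let ?x = "[:0, 1:] :: complex poly poly poly" and ?y = "[:[:0, 1:]:]" and ?z = "[:[:[:0, 1:]:]:]"
  have surj: "\<exists>q. p = embed3 q" if "in_ring 3 p" for p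
    using that bij_betw_embed3 by (auto simp: in_ring_iff_mpolys_over bij_betw_def)
  obtain g' where g': "g = embed3 g'" using surj[OF g] by blast
  have "\<forall>f\<in>set fs. \<exists>q. f = embed3 q" using fs surj by blast
  then obtain qs where qs: "fs = map embed3 qs" unfolding ex_map_conv[symmetric] by blast
  note ideal_iff = mem_ideal_gen_image_iff[OF is_ring_hom_embed3 bij_betw_embed3]
  have mult': "\<forall>i<n. [?x, ?y, ?z] ! i * g' \<in> ideal_of qs"
  proof (intro allI impI)
    fix i assume "i < n"
    then have "i = 0 \<or> i = 1 \<or> i = 2" using n by auto
    then have "embed3 ([?x, ?y, ?z] ! i) = var i" using embed3_vars by auto
    then have "embed3 ([?x, ?y, ?z] ! i * g') = var i * g"
      by (simp add: is_ring_hom_mult[OF is_ring_hom_embed3] g')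
    then show "[?x, ?y, ?z] ! i * g' \<in> ideal_of qs"
      using mult \<open>i < n\<close> unfolding ideal_iff[symmetric] qs[symmetric] by simp
  qed
  have "coprime ?x ?y" by (rule coprime_X_const) simp
  moreover have "?x \<noteq> 0" by simp
  moreover have "regular_mod ?z ?x ?y" by (intro regular_mod_X_const coprime_X_const) simp
  moreover have "length qs < n" using len qs by simp
  ultimately have "g' \<in> ideal_of qs" using n mult' by (rule mem_ideal_of_if_mult_mem)
  then show ?thesis unfolding g' qs ideal_iff .
qed

section \<open>Homogeneous components\<close>

lemma mon_deg_eq_sum:
  assumes "finite A" and "Poly_Mapping.keys a \<subseteq> A"
  shows "mon_deg a = (\<Sum>i\<in>A. Poly_Mapping.lookup a i)"
  unfolding mon_deg_def using assms by (intro sum.mono_neutral_left) (auto simp: in_keys_iff)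

lemma mon_deg_add: "mon_deg (a + b) = mon_deg a + mon_deg b"
proof -
  let ?A = "Poly_Mapping.keys a \<union> Poly_Mapping.keys b"
  have "mon_deg (a + b) = (\<Sum>i\<in>?A. Poly_Mapping.lookup (a + b) i)"
    using keys_add[of a b] by (intro mon_deg_eq_sum) auto
  also have "\<dots> = (\<Sum>i\<in>?A. Poly_Mapping.lookup a i) + (\<Sum>i\<in>?A. Poly_Mapping.lookup b i)"
    by (simp add: lookup_add sum.distrib)
  also have "\<dots> = mon_deg a + mon_deg b"
    by (subst (1 2) mon_deg_eq_sum[of ?A]) auto
  finally show ?thesis .
qed

lemma mon_deg_single: "mon_deg (Poly_Mapping.single i j) = j"
  by (simp add: mon_deg_def)

lemma mon_deg_eq_0_iff: "mon_deg a = 0 \<longleftrightarrow> a = 0"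
  by (auto simp: mon_deg_def in_keys_iff intro: poly_mapping_eqI)

lemma lookup_eq_0_if_homogeneous:
  "homogeneous d p \<Longrightarrow> mon_deg m \<noteq> d \<Longrightarrow> Poly_Mapping.lookup p m = 0"
  by (auto simp: homogeneous_def in_keys_iff)

lemma lookup_mult_homogeneous:
  assumes f: "homogeneous d f" and m: "mon_deg m = d"
  shows "Poly_Mapping.lookup (h * f) m = Poly_Mapping.lookup h 0 * Poly_Mapping.lookup f m"
proof -
  have "(Poly_Mapping.lookup f q when m = l + q) = 0" if "l \<noteq> 0" for l q
  proof (cases "m = l + q")
    case True
    then have "mon_deg q \<noteq> d" using m that mon_deg_eq_0_iff[of l] by (simp add: mon_deg_add)
    then show ?thesis using f by (simp add: lookup_eq_0_if_homogeneous)
  qed simp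
  then have "Poly_Mapping.lookup h l * (\<Sum>q. Poly_Mapping.lookup f q when m = l + q) =
      (Poly_Mapping.lookup h 0 * Poly_Mapping.lookup f m when l = 0)" for l
    by (cases "l = 0") simp_all
  then show ?thesis by (simp add: lookup_mult)
qed

lemma homogeneous_add: "homogeneous d p \<Longrightarrow> homogeneous d q \<Longrightarrow> homogeneous d (p + q)"
  unfolding homogeneous_def using keys_add[of p q] by blast

lemma homogeneous_var_mult: "homogeneous d p \<Longrightarrow> homogeneous (d + 1) (var i * p)"
  unfolding homogeneous_def var_def
  using keys_mult[of "Poly_Mapping.single (Poly_Mapping.single i 1) 1" p]
  by (auto simp: mon_deg_add mon_deg_single)

lemma homogeneous_lin_comb:
  assumes g: "homogeneous d g" and fs: "\<forall>f\<in>set fs. homogeneous d f"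
    and comb: "g = (\<Sum>i<length fs. h i * fs ! i)"
  shows "g = (\<Sum>i<length fs. smult_mp (Poly_Mapping.lookup (h i) 0) (fs ! i))"
proof (rule poly_mapping_eqI)
  fix m
  show "Poly_Mapping.lookup g m =
      Poly_Mapping.lookup (\<Sum>i<length fs. smult_mp (Poly_Mapping.lookup (h i) 0) (fs ! i)) m"
  proof (cases "mon_deg m = d")
    case True
    have "Poly_Mapping.lookup (h i * fs ! i) m =
        Poly_Mapping.lookup (h i) 0 * Poly_Mapping.lookup (fs ! i) m"
      if "i < length fs" for i
      using fs that True by (intro lookup_mult_homogeneous) auto
    then show ?thesis by (subst comb) (simp add: lookup_sum lookup_smult_mp)
  next
    case False
    then have "Poly_Mapping.lookup (fs ! i) m = 0" if "i < length fs" for i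
      using fs that by (intro lookup_eq_0_if_homogeneous) auto
    then show ?thesis
      using g False by (simp add: lookup_sum lookup_smult_mp lookup_eq_0_if_homogeneous)
  qed
qed

lemma lin_indep_snoc_not_lin_comb:
  assumes "lin_indep (fs @ [g])"
  shows "g \<noteq> (\<Sum>i<length fs. smult_mp (c i) (fs ! i))"
proof
  assume comb: "g = (\<Sum>i<length fs. smult_mp (c i) (fs ! i))"
  define c' where "c' i = (if i < length fs then c i else -1)" for i
  have "(\<Sum>i<length (fs @ [g]). smult_mp (c' i) ((fs @ [g]) ! i))
      = (\<Sum>i<length fs. smult_mp (c i) (fs ! i)) + smult_mp (-1) g"
    by (simp add: c'_def nth_append)
  also have "\<dots> = g + smult_mp (-1) g"
    by (simp only: comb)
  also have "\<dots> = 0"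
    by (simp add: smult_mp_eq_const_mpoly_mult const_mpoly_def single_uminus)
  finally have "c' (length fs) = 0"
    using assms unfolding lin_indep_def by (metis length_append_singleton lessI)
  then show False by (simp add: c'_def)
qed

lemma var_mult_mem_if_admissible:
  assumes adm: "admissible n m fs g" and i: "i < n"
  shows "var i * g \<in> ideal_gen n fs"
proof -
  have "var i * g \<in> ideal_gen n [g]"
    using in_ring_var[OF i] by (auto simp: ideal_gen_def intro: exI[of _ "\<lambda>_. var i"])
  moreover have "homogeneous (m + 1) (var i * g)"
    using adm homogeneous_var_mult by (simp add: admissible_def)
  ultimately show ?thesis
    using adm by (auto simp: admissible_def hom_comp_def)
qed

lemma admissible_length_ge:
  assumes adm: "admissible n m fs g" and n: "n \<le> 3"
  shows "n \<le> length fs"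
proof (rule ccontr)
  assume "\<not> n \<le> length fs"
  moreover have "in_ring 3 g" "\<forall>f\<in>set fs. in_ring 3 f"
    using adm n by (auto simp: admissible_def intro: in_ring_mono)
  moreover have "\<forall>i<n. var i * g \<in> ideal_gen 3 fs"
    using var_mult_mem_if_admissible[OF adm] ideal_gen_mono[OF n] by blast
  ultimately have "g \<in> ideal_gen 3 fs"
    using n by (intro mem_ideal_gen_3_if_var_mult_mem) auto
  then obtain h where "g = (\<Sum>i<length fs. h i * fs ! i)"
    by (auto simp: ideal_gen_def)
  then have "g = (\<Sum>i<length fs. smult_mp (Poly_Mapping.lookup (h i) 0) (fs ! i))"
    using adm by (intro homogeneous_lin_comb) (auto simp: admissible_def)
  moreover have "lin_indep (fs @ [g])" using adm by (simp add: admissible_def)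
  ultimately show False
    using lin_indep_snoc_not_lin_comb[of fs g "\<lambda>i. Poly_Mapping.lookup (h i) 0"] by simp
qed

section \<open>An example with n - 1 generators\<close>

lemma lin_indep_if_dual_monomials:
  assumes len: "length ws = length xs"
    and dual: "\<And>i j. i < length xs \<Longrightarrow> j < length xs \<Longrightarrow>
      Poly_Mapping.lookup (xs ! j) (ws ! i) = (if j = i then 1 else 0)"
  shows "lin_indep xs"
  unfolding lin_indep_def
proof (intro allI impI)
  fix c :: "nat \<Rightarrow> complex" and i
  assume comb: "(\<Sum>j<length xs. smult_mp (c j) (xs ! j)) = 0" and i: "i < length xs"
  have "0 = Poly_Mapping.lookup (\<Sum>j<length xs. smult_mp (c j) (xs ! j)) (ws ! i)"
    by (simp add: comb)
  also have "\<dots> = (\<Sum>j<length xs. if j = i then c j else 0)"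
    using dual[OF i]
    by (simp add: lookup_sum lookup_smult_mp if_distrib[of "\<lambda>x. _ * x"] cong: if_cong)
  also have "\<dots> = c i" using i by simp
  finally show "c i = 0" by simp
qed

definition mon2 :: "nat \<Rightarrow> nat \<Rightarrow> (nat \<Rightarrow>\<^sub>0 nat)" where
  "mon2 a b = Poly_Mapping.single a 1 + Poly_Mapping.single b 1"

lemma var_mult_var: "var a * var b = Poly_Mapping.single (mon2 a b) 1"
  by (simp add: var_def mon2_def mult_single)

lemma mon_deg_mon2: "mon_deg (mon2 a b) = 2"
  by (simp add: mon2_def mon_deg_add mon_deg_single)

lemma mon2_commute: "mon2 a b = mon2 b a"
  by (simp add: mon2_def add.commute)

lemma mon2_eq_iff: "mon2 a b = mon2 c d \<longleftrightarrow> (a = c \<and> b = d) \<or> (a = d \<and> b = c)"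
proof
  assume eq: "mon2 a b = mon2 c d"
  have single_inj: "x = y" if "Poly_Mapping.single x (1::nat) = Poly_Mapping.single y 1" for x y
    using arg_cong[OF that, of "\<lambda>m. Poly_Mapping.lookup m x"]
    by (simp add: lookup_single when_def split: if_splits)
  have "a = c \<or> a = d"
    using arg_cong[OF eq, of "\<lambda>m. Poly_Mapping.lookup m a"]
    by (auto simp: mon2_def lookup_add lookup_single when_def split: if_splits)
  then show "(a = c \<and> b = d) \<or> (a = d \<and> b = c)"
  proof
    assume "a = c"
    then have "Poly_Mapping.single b 1 = Poly_Mapping.single d (1::nat)"
      using eq by (simp add: mon2_def)
    then have "b = d" by (rule single_inj)
    with \<open>a = c\<close> show ?thesis by simp
  next
    assume "a = d"
    then have "mon2 a b = mon2 a c" using eq mon2_commute[of c d] by simp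
    then have "Poly_Mapping.single b 1 = Poly_Mapping.single c (1::nat)" by (simp add: mon2_def)
    then have "b = c" by (rule single_inj)
    with \<open>a = d\<close> show ?thesis by simp
  qed
qed (auto simp: mon2_commute)

lemma homogeneous_var_mult_var: "homogeneous 2 (var a * var b)"
  by (simp add: homogeneous_def var_mult_var mon_deg_mon2)

lemma in_ring_var_mult_var: "a < n \<Longrightarrow> b < n \<Longrightarrow> in_ring n (var a * var b)"
  by (simp add: in_ring_mult in_ring_var)

definition example_g :: mpoly where
  "example_g = var 0 * var 1"

definition example_fs :: "nat \<Rightarrow> mpoly list" where
  "example_fs n = [var 0 * var 0, var 1 * var 1, var 0 * var 2 + var 1 * var 3] @
     map (\<lambda>k. var 0 * var k) [4..<n]"

text \<open>For each member of example_fs n @ [example_g], a monomial occurring in no other member.\<close>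

definition example_witnesses :: "nat \<Rightarrow> (nat \<Rightarrow>\<^sub>0 nat) list" where
  "example_witnesses n = [mon2 0 0, mon2 1 1, mon2 0 2] @ map (mon2 0) [4..<n] @ [mon2 0 1]"

lemma length_example_fs: "4 \<le> n \<Longrightarrow> length (example_fs n) = n - 1"
  by (simp add: example_fs_def)

lemma nth_example_fs:
  assumes "3 \<le> j" and "j < n - 1"
  shows "example_fs n ! j = var 0 * var (j + 1)"
proof -
  have "[4..<n] ! (j - 3) = j + 1" using assms by (subst nth_upt) auto
  then show ?thesis using assms by (simp add: example_fs_def nth_append)
qed

lemma nth_example_list:
  assumes n: "4 \<le> n" and j: "j < n"
  shows "(example_fs n @ [example_g]) ! j =
    Poly_Mapping.single (example_witnesses n ! j) 1 + (if j = 2 then var 1 * var 3 else 0)"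
proof -
  consider "j < 3" | "3 \<le> j" "j < n - 1" | "j = n - 1" using j by linarith
  then show ?thesis
  proof cases
    case 1
    then have "j = 0 \<or> j = 1 \<or> j = 2" by auto
    then show ?thesis
      by (auto simp: example_fs_def example_witnesses_def var_mult_var)
  next
    case 2
    then have "j - 3 < n - 4" and "[4..<n] ! (j - 3) = j + 1" by (simp, subst nth_upt) auto
    with 2 n show ?thesis
      by (simp add: nth_append length_example_fs nth_example_fs example_witnesses_def var_mult_var
          numeral_3_eq_3)
  next
    case 3
    then show ?thesis using n
      by (simp add: nth_append length_example_fs example_witnesses_def example_g_def var_mult_var
          eval_nat_numeral)
  qed
qed

lemma distinct_example_witnesses: "distinct (example_witnesses n)"
  by (auto simp: example_witnesses_def mon2_eq_iff distinct_map inj_on_def)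

lemma lin_indep_example: "4 \<le> n \<Longrightarrow> lin_indep (example_fs n @ [example_g])"
proof (rule lin_indep_if_dual_monomials)
  assume n: "4 \<le> n"
  show "length (example_witnesses n) = length (example_fs n @ [example_g])"
    using n by (simp add: example_witnesses_def length_example_fs)
  fix i j
  assume "i < length (example_fs n @ [example_g])" "j < length (example_fs n @ [example_g])"
  then have i: "i < n" and j: "j < n" using n by (simp_all add: length_example_fs)
  have "mon2 1 3 \<notin> set (example_witnesses n)"
    by (auto simp: example_witnesses_def mon2_eq_iff)
  moreover have "example_witnesses n ! i \<in> set (example_witnesses n)"
    using i n by (intro nth_mem) (simp add: example_witnesses_def)
  ultimately have "mon2 1 3 \<noteq> example_witnesses n ! i" by auto
  moreover have "example_witnesses n ! j = example_witnesses n ! i \<longleftrightarrow> j = i"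
    using distinct_example_witnesses i j n by (simp add: nth_eq_iff_index_eq example_witnesses_def)
  ultimately show
    "Poly_Mapping.lookup ((example_fs n @ [example_g]) ! j) (example_witnesses n ! i) =
      (if j = i then 1 else 0)"
    using n j by (simp add: nth_example_list lookup_add lookup_single var_mult_var when_def)
qed

lemma var_mult_example_g_mem:
  assumes n: "4 \<le> n" and k: "k < n"
  shows "var k * example_g \<in> ideal_gen n (example_fs n)"
proof -
  have gen: "r * example_fs n ! i \<in> ideal_gen n (example_fs n)" if "i < n - 1" "in_ring n r" for i r
    using that n by (intro mult_gen_mem_ideal_gen) (simp_all add: length_example_fs)
  have var: "in_ring n (var j)" "in_ring n (- var j)" if "j < n" for j
    using that by (simp_all add: in_ring_var in_ring_uminus)
  consider "k = 0" | "k = 1" | "k = 2" | "k = 3" | "4 \<le> k" by linarith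
  then show ?thesis
  proof cases
    case 1
    then have "var k * example_g = var 1 * example_fs n ! 0"
      by (simp add: example_fs_def example_g_def ac_simps)
    then show ?thesis using gen var n by simp
  next
    case 2
    then have "var k * example_g = var 0 * example_fs n ! 1"
      by (simp add: example_fs_def example_g_def ac_simps)
    then show ?thesis using gen var n by simp
  next
    case 3
    then have eq: "var k * example_g = var 1 * example_fs n ! 2 + (- var 3) * example_fs n ! 1"
      by (simp add: example_fs_def example_g_def algebra_simps)
    show ?thesis unfolding eq using n by (intro ideal_gen_add gen var) simp_all
  next
    case 4
    then have eq: "var k * example_g = var 0 * example_fs n ! 2 + (- var 2) * example_fs n ! 0"
      by (simp add: example_fs_def example_g_def algebra_simps)
    show ?thesis unfolding eq using n by (intro ideal_gen_add gen var) simp_all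
  next
    case 5
    then have "var k * example_g = var 1 * example_fs n ! (k - 1)"
      using k by (simp add: nth_example_fs example_g_def ac_simps)
    then show ?thesis using gen var n k by simp
  qed
qed

lemma example_inclusion:
  assumes n: "4 \<le> n"
  shows "hom_comp (ideal_gen n [example_g]) 3 \<subseteq> hom_comp (ideal_gen n (example_fs n)) 3"
proof
  fix p assume "p \<in> hom_comp (ideal_gen n [example_g]) 3"
  then obtain h where p: "p = h * example_g" and h: "in_ring n h" and hom: "homogeneous 3 p"
    by (auto simp: hom_comp_def ideal_gen_def)
  have "Poly_Mapping.lookup p (mon2 0 1) = Poly_Mapping.lookup h 0"
    unfolding p using homogeneous_var_mult_var[of 0 1]
    by (simp add: lookup_mult_homogeneous mon_deg_mon2 example_g_def var_mult_var)
  moreover have "Poly_Mapping.lookup p (mon2 0 1) = 0"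
    using hom by (simp add: lookup_eq_0_if_homogeneous mon_deg_mon2)
  ultimately have "p \<in> ideal_gen n (example_fs n)"
    using mult_mem_ideal_gen_if_var_mult_mem var_mult_example_g_mem[OF n] h p by simp
  with hom show "p \<in> hom_comp (ideal_gen n (example_fs n)) 3" by (simp add: hom_comp_def)
qed

lemma admissible_example:
  assumes n: "4 \<le> n"
  shows "admissible n 2 (example_fs n) example_g"
proof -
  have "\<forall>f\<in>set (example_fs n). in_ring n f \<and> homogeneous 2 f"
    using n by (auto simp: example_fs_def in_ring_var_mult_var homogeneous_var_mult_var
        intro!: in_ring_add homogeneous_add)
  moreover have "in_ring n example_g" "homogeneous 2 example_g"
    using n by (simp_all add: example_g_def in_ring_var_mult_var homogeneous_var_mult_var)
  ultimately show ?thesis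
    using lin_indep_example[OF n] example_inclusion[OF n] by (simp add: admissible_def)
qed

theorem theorem2:
  shows "(\<forall>n m fs g. n \<le> 3 \<longrightarrow> admissible n m fs g \<longrightarrow> length fs \<ge> n) \<and>
         (\<forall>n\<ge>4. \<exists>m fs g. admissible n m fs g \<and> length fs < n)"
proof (intro conjI allI impI)
  fix n m fs g assume "n \<le> 3" and "admissible n m fs g"
  then show "length fs \<ge> n" by (intro admissible_length_ge)
next
  fix n :: nat assume "4 \<le> n"
  then have "admissible n 2 (example_fs n) example_g \<and> length (example_fs n) < n"
    by (simp add: admissible_example length_example_fs)
  then show "\<exists>m fs g. admissible n m fs g \<and> length fs < n" by blast
qed

end
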